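(* Let $k\ge 1$ and let $n=t_k=\frac{k(k+1)}{2}$. Then the maximum number of edges of a locally irregular (simple) graph of order $n$ is exactly $m_k:=\frac{k(k+1)(k-1)(3k+2)}{24}$.
   Context: All graphs are finite and simple. A graph is locally irregular if no two adjacent vertices have the same degree. $t_k=1+2+\dots+k$ denotes the $k$-th triangular number. *)

theory Defs
  imports Main
begin

definition simple_graph :: "'a set \<Rightarrow> 'a set set \<Rightarrow> bool" where
  "simple_graph V E \<longleftrightarrow> finite V \<and> (\<forall>e\<in>E. e \<subseteq> V \<and> card e = 2)"

definition degree :: "'a set set \<Rightarrow> 'a \<Rightarrow> nat" where
  "degree E v = card {e\<in>E. v \<in> e}"

definition locally_irregular :: "'a set set \<Rightarrow> bool" where
  "locally_irregular E \<longleftrightarrow> (\<forall>u v. {u, v} \<in> E \<and> u \<noteq> v \<longrightarrow> degree E u \<noteq> degree E v)"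

definition triangular :: "nat \<Rightarrow> nat" where
  "triangular k = (\<Sum>i=1..k. i)"

end

theory Submission
  imports Defs
begin

text \<open>In a locally irregular graph on \<open>n\<close> vertices the \<open>d\<close> neighbours of a vertex of degree \<open>d\<close>
  all have other degrees, so the number \<open>a\<^sub>d\<close> of vertices of degree \<open>d\<close>
  is at most \<open>n - d\<close>. For a threshold \<open>c = n - k\<close>
  the vertices of degree \<open>d\<close> therefore contribute at most \<open>c a\<^sub>d + (d - c)(n - d)\<close> to the
  degree sum, whence \<open>2|E| \<le> (n - k) n + (\<Sum>j\<le>k. j (k - j))\<close>; for \<open>n = t\<^sub>k\<close> this is \<open>2 m\<^sub>k\<close>.
  The bound is attained by the complete multipartite graph with parts of sizes \<open>1, \<dots>, k\<close>:
  a vertex in the part of size \<open>j\<close> has degree \<open>n - j\<close>, so adjacent vertices have distinct degrees.\<close>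

lemma card_filter_add_card_filter_not:
  "finite A \<Longrightarrow> card {x\<in>A. P x} + card {x\<in>A. \<not> P x} = card A"
  by (subst card_Un_disjoint[symmetric]) (auto intro: arg_cong[where f = card])

lemma simple_graph_finite_edges: "simple_graph V E \<Longrightarrow> finite E"
  unfolding simple_graph_def by (meson Pow_iff finite_Pow_iff finite_subset subsetI)

lemma sum_degree_eq_twice_card_edges:
  assumes "simple_graph V E"
  shows "(\<Sum>v\<in>V. degree E v) = 2 * card E"
proof -
  have "card {v\<in>V. v \<in> e} = 2" if "e \<in> E" for e
  proof -
    have "{v\<in>V. v \<in> e} = e" using that assms unfolding simple_graph_def by auto
    then show ?thesis using that assms unfolding simple_graph_def by simp
  qed
  then show ?thesis
    unfolding degree_def
    using sum_multicount[of V E "\<lambda>v e. v \<in> e" 2] assms simple_graph_finite_edges[OF assms]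
    by (simp add: simple_graph_def mult.commute)
qed

lemma triangular_Suc: "triangular (Suc k) = triangular k + Suc k"
  unfolding triangular_def by simp

lemma double_triangular: "2 * triangular k = k * (k + 1)"
  using double_gauss_sum_from_Suc_0[of k, where 'a = nat] by (simp add: triangular_def)

lemma triangular_mono: "i \<le> j \<Longrightarrow> triangular i \<le> triangular j"
  by (induction j rule: dec_induct) (auto simp: triangular_Suc)

lemma degree_add_card_same_degree_le:
  assumes G: "simple_graph V E" and L: "locally_irregular E" and v: "v \<in> V"
  shows "degree E v + card {u\<in>V. degree E u = degree E v} \<le> card V"
proof -
  have fV: "finite V" using G unfolding simple_graph_def by simp
  have "{e\<in>E. v \<in> e} \<subseteq> (\<lambda>u. {u, v}) ` {u\<in>V. degree E u \<noteq> degree E v}"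
  proof
    fix e assume "e \<in> {e\<in>E. v \<in> e}"
    then have e: "e \<in> E" "v \<in> e" "e \<subseteq> V" "card e = 2"
      using G unfolding simple_graph_def by auto
    then obtain u where u: "e = {u, v}" "u \<noteq> v"
      by (metis card_2_iff insert_commute insertE singletonD)
    then have "degree E u \<noteq> degree E v"
      using L e(1) unfolding locally_irregular_def by blast
    then show "e \<in> (\<lambda>u. {u, v}) ` {u\<in>V. degree E u \<noteq> degree E v}"
      using u e(3) by auto
  qed
  then have "degree E v \<le> card ((\<lambda>u. {u, v}) ` {u\<in>V. degree E u \<noteq> degree E v})"
    unfolding degree_def using fV by (intro card_mono) auto
  also have "\<dots> \<le> card {u\<in>V. degree E u \<noteq> degree E v}"
    using fV by (intro card_image_le) auto
  finally show ?thesis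
    using card_filter_add_card_filter_not[OF fV, of "\<lambda>u. degree E u = degree E v"] by simp
qed

lemma mult_le_threshold_split:
  fixes d a n c :: nat
  assumes "d + a \<le> n"
  shows "d * a \<le> c * a + (d - c) * (n - d)"
proof (cases "d \<le> c")
  case True
  then show ?thesis by (simp add: mult_right_mono)
next
  case False
  then have "d * a = c * a + (d - c) * a" by (simp add: diff_mult_distrib)
  also have "(d - c) * a \<le> (d - c) * (n - d)" using assms by (simp add: le_diff_conv2)
  finally show ?thesis by simp
qed

lemma sum_atMost_shift_products:
  "(\<Sum>d\<le>m + k. (d - m) * (m + k - d)) = (\<Sum>j\<le>k. j * (k - j::nat))"
proof (induction m)
  case 0
  then show ?case by simp
next
  case (Suc m)
  have "(\<Sum>d\<le>Suc (m + k). (d - Suc m) * (Suc m + k - d)) = (\<Sum>d\<le>m + k. (d - m) * (m + k - d))"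
    by (subst sum.atMost_Suc_shift) simp
  then show ?case using Suc by simp
qed

lemma sum_products_complement: "6 * (\<Sum>j\<le>k. j * (k - j)) = (k - 1) * k * (k + 1::nat)"
proof (induction k)
  case 0
  then show ?case by simp
next
  case (Suc k)
  have "(\<Sum>j\<le>Suc k. j * (Suc k - j)) = (\<Sum>j\<le>k. j * (k - j) + j)"
    by (auto simp: Suc_diff_le algebra_simps intro: sum.cong)
  also have "\<dots> = (\<Sum>j\<le>k. j * (k - j)) + (\<Sum>j\<le>k. j)"
    by (simp add: sum.distrib)
  finally have "6 * (\<Sum>j\<le>Suc k. j * (Suc k - j)) = (k - 1) * k * (k + 1) + 3 * (k * (k + 1))"
    using Suc double_gauss_sum[of k, where 'a = nat] by (simp add: atLeast0AtMost)
  then show ?case by (cases k) (auto simp: algebra_simps)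
qed

lemma locally_irregular_twice_card_edges_le:
  assumes G: "simple_graph V E" and L: "locally_irregular E" and k: "k \<le> card V"
  shows "2 * card E \<le> (card V - k) * card V + (\<Sum>j\<le>k. j * (k - j))"
proof -
  define n where "n = card V"
  define c where "c = n - k"
  define a where "a d = card {v\<in>V. degree E v = d}" for d
  have fV: "finite V" using G unfolding simple_graph_def by simp
  have class_bound: "d + a d \<le> n" if "d \<in> degree E ` V" for d
    using that degree_add_card_same_degree_le[OF G L] unfolding a_def n_def by auto
  have "2 * card E = (\<Sum>d\<in>degree E ` V. \<Sum>v\<in>{v\<in>V. degree E v = d}. degree E v)"
    using sum_degree_eq_twice_card_edges[OF G] sum.image_gen[OF fV] by metis
  also have "\<dots> = (\<Sum>d\<in>degree E ` V. d * a d)"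
    unfolding a_def by (intro sum.cong) auto
  also have "\<dots> \<le> (\<Sum>d\<in>degree E ` V. c * a d + (d - c) * (n - d))"
    using class_bound by (intro sum_mono mult_le_threshold_split)
  also have "\<dots> = c * (\<Sum>d\<in>degree E ` V. a d) + (\<Sum>d\<in>degree E ` V. (d - c) * (n - d))"
    by (simp add: sum.distrib sum_distrib_left)
  also have "(\<Sum>d\<in>degree E ` V. a d) = n"
    unfolding a_def n_def card_eq_sum by (rule sum.image_gen[OF fV, symmetric])
  also have "(\<Sum>d\<in>degree E ` V. (d - c) * (n - d)) \<le> (\<Sum>d\<le>n. (d - c) * (n - d))"
    using class_bound by (intro sum_mono2) fastforce+
  also have "\<dots> = (\<Sum>j\<le>k. j * (k - j))"
    using sum_atMost_shift_products[of c k] k unfolding c_def n_def by simp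
  finally show ?thesis unfolding c_def n_def by simp
qed

lemma locally_irregular_triangular_card_edges_le:
  assumes "simple_graph {0..<triangular k} E" and "locally_irregular E"
  shows "24 * card E \<le> k * (k + 1) * (k - 1) * (3 * k + 2)"
proof -
  define n where "n = triangular k"
  have n: "2 * n = k * (k + 1)"
    using double_triangular[of k] unfolding n_def .
  then have k: "k \<le> n"
    by (cases k) auto
  have n_minus_k: "2 * (n - k) = k * (k - 1)"
    using n by (cases k) (auto simp: algebra_simps)
  have "12 * (2 * card E) \<le> 12 * ((n - k) * n) + 2 * (6 * (\<Sum>j\<le>k. j * (k - j)))"
    using locally_irregular_twice_card_edges_le[OF assms, of k] k unfolding n_def by simp
  also have "12 * ((n - k) * n) = 3 * (2 * (n - k)) * (2 * n)"
    by simp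
  also have "\<dots> = 3 * (k * (k - 1)) * (k * (k + 1))"
    unfolding n n_minus_k ..
  finally show ?thesis
    unfolding sum_products_complement by (cases k) (auto simp: algebra_simps)
qed

definition complete_multipartite :: "('a \<Rightarrow> 'b) \<Rightarrow> 'a set \<Rightarrow> 'a set set" where
  "complete_multipartite p V = {{u, v} | u v. u \<in> V \<and> v \<in> V \<and> p u \<noteq> p v}"

lemma simple_graph_complete_multipartite:
  "finite V \<Longrightarrow> simple_graph V (complete_multipartite p V)"
  unfolding simple_graph_def complete_multipartite_def by (auto simp: card_2_iff)

lemma degree_complete_multipartite:
  assumes "finite V" and "v \<in> V"
  shows "degree (complete_multipartite p V) v = card V - card {u\<in>V. p u = p v}"
proof -
  have "{e \<in> complete_multipartite p V. v \<in> e} = (\<lambda>u. {u, v}) ` {u\<in>V. p u \<noteq> p v}"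
    unfolding complete_multipartite_def using assms(2) by (auto simp: insert_commute)
  moreover have "inj_on (\<lambda>u. {u, v}) {u\<in>V. p u \<noteq> p v}"
    by (auto simp: inj_on_def doubleton_eq_iff)
  ultimately have "degree (complete_multipartite p V) v = card {u\<in>V. p u \<noteq> p v}"
    unfolding degree_def by (simp add: card_image)
  then show ?thesis
    using card_filter_add_card_filter_not[OF assms(1), of "\<lambda>u. p u = p v"] by simp
qed

lemma locally_irregular_complete_multipartite:
  assumes "finite V"
    and distinct_sizes: "\<And>u v. u \<in> V \<Longrightarrow> v \<in> V \<Longrightarrow> p u \<noteq> p v \<Longrightarrow>
      card {w\<in>V. p w = p u} \<noteq> card {w\<in>V. p w = p v}"
  shows "locally_irregular (complete_multipartite p V)"
  unfolding locally_irregular_def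
proof (intro allI impI)
  fix u v assume "{u, v} \<in> complete_multipartite p V \<and> u \<noteq> v"
  then have uv: "u \<in> V" "v \<in> V" "p u \<noteq> p v"
    unfolding complete_multipartite_def by (auto simp: doubleton_eq_iff)
  have "card {w\<in>V. p w = p u} \<le> card V" "card {w\<in>V. p w = p v} \<le> card V"
    using assms(1) by (auto intro: card_mono)
  then show "degree (complete_multipartite p V) u \<noteq> degree (complete_multipartite p V) v"
    using distinct_sizes[OF uv] degree_complete_multipartite[OF assms(1) uv(1), of p]
      degree_complete_multipartite[OF assms(1) uv(2), of p]
    by linarith
qed

definition triangular_block :: "nat \<Rightarrow> nat" where
  "triangular_block v = (LEAST j. v < triangular j)"

lemma triangular_block_eq:
  assumes "triangular j \<le> v" and "v < triangular (Suc j)"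
  shows "triangular_block v = Suc j"
  unfolding triangular_block_def
proof (rule Least_equality)
  fix i assume "v < triangular i"
  then show "Suc j \<le> i"
    using assms(1) triangular_mono[of i j] by (cases "Suc j \<le> i") auto
qed fact

lemma ex_triangular_block:
  "v < triangular k \<Longrightarrow> \<exists>j<k. triangular j \<le> v \<and> v < triangular (Suc j)"
proof (induction k)
  case 0
  then show ?case by (simp add: triangular_def)
next
  case (Suc k)
  then show ?case
    by (cases "v < triangular k") (auto intro: less_SucI)
qed

lemma triangular_block_class:
  assumes "triangular j \<le> v" and "v < triangular (Suc j)" and "j < k"
  shows "{u\<in>{0..<triangular k}. triangular_block u = triangular_block v}
    = {triangular j..<triangular (Suc j)}"
proof -
  have "triangular (Suc j) \<le> triangular k"
    using assms(3) by (intro triangular_mono) simp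
  moreover have "triangular_block u = Suc j \<longleftrightarrow> triangular j \<le> u \<and> u < triangular (Suc j)"
    if u: "u < triangular k" for u
  proof
    obtain i where i: "triangular i \<le> u" "u < triangular (Suc i)"
      using ex_triangular_block[OF u] by blast
    assume "triangular_block u = Suc j"
    then have "i = j" using triangular_block_eq[OF i] by simp
    then show "triangular j \<le> u \<and> u < triangular (Suc j)" using i by simp
  qed (use triangular_block_eq in blast)
  ultimately show ?thesis
    using triangular_block_eq[OF assms(1,2)] by auto
qed

lemma card_triangular_block_class:
  assumes "v < triangular k"
  shows "card {u\<in>{0..<triangular k}. triangular_block u = triangular_block v} = triangular_block v"
proof -
  obtain j where "j < k" "triangular j \<le> v" "v < triangular (Suc j)"
    using ex_triangular_block[OF assms] by blast
  then show ?thesis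
    using triangular_block_class triangular_block_eq by (simp add: triangular_Suc)
qed

lemma sum_triangular_block: "6 * (\<Sum>v<triangular k. triangular_block v) = k * (k + 1) * (2 * k + 1)"
proof (induction k)
  case 0
  then show ?case by (simp add: triangular_def)
next
  case (Suc k)
  have "(\<Sum>v<triangular (Suc k). triangular_block v)
      = (\<Sum>v<triangular k. triangular_block v) + (\<Sum>v\<in>{triangular k..<triangular (Suc k)}. triangular_block v)"
    unfolding lessThan_atLeast0 by (rule sum.atLeastLessThan_concat[symmetric]) (auto simp: triangular_Suc)
  also have "(\<Sum>v\<in>{triangular k..<triangular (Suc k)}. triangular_block v)
      = (\<Sum>v\<in>{triangular k..<triangular (Suc k)}. Suc k)"
    by (intro sum.cong refl triangular_block_eq) auto
  also have "\<dots> = Suc k * Suc k"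
    by (simp add: triangular_Suc)
  finally show ?case
    using Suc by (simp add: triangular_Suc algebra_simps)
qed

lemma card_complete_multipartite_triangular_block:
  "24 * card (complete_multipartite triangular_block {0..<triangular k})
    = k * (k + 1) * (k - 1) * (3 * k + 2)"
proof -
  define n where "n = triangular k"
  define E where "E = complete_multipartite triangular_block {0..<n}"
  have degree: "degree E v = n - triangular_block v" and block_le: "triangular_block v \<le> n"
    if "v < n" for v
  proof -
    let ?class = "{u\<in>{0..<n}. triangular_block u = triangular_block v}"
    have "card ?class = triangular_block v"
      using card_triangular_block_class[of v k] that unfolding n_def by simp
    moreover have "card ?class \<le> card {0..<n}"
      by (intro card_mono) auto
    moreover have "degree E v = card {0..<n} - card ?class"
      unfolding E_def using that by (intro degree_complete_multipartite) auto
    ultimately show "degree E v = n - triangular_block v" "triangular_block v \<le> n"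
      by simp_all
  qed
  have "2 * card E = (\<Sum>v<n. degree E v)"
    unfolding E_def lessThan_atLeast0
    by (rule sum_degree_eq_twice_card_edges[symmetric, OF simple_graph_complete_multipartite]) simp
  also have "\<dots> = (\<Sum>v<n. n - triangular_block v)"
    using degree by simp
  finally have "2 * card E = (\<Sum>v<n. n - triangular_block v)" .
  then have "2 * card E + (\<Sum>v<n. triangular_block v) = (\<Sum>v<n. n)"
    using block_le by (simp flip: sum.distrib)
  then have "12 * (2 * card E) + 2 * (6 * (\<Sum>v<n. triangular_block v)) = 3 * (2 * n) * (2 * n)"
    by simp
  then show ?thesis
    unfolding E_def n_def double_triangular sum_triangular_block
    by (cases k) (auto simp: algebra_simps)
qed

lemma locally_irregular_complete_multipartite_triangular_block:
  "locally_irregular (complete_multipartite triangular_block {0..<triangular k})"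
proof (rule locally_irregular_complete_multipartite)
  fix u v assume "u \<in> {0..<triangular k}" "v \<in> {0..<triangular k}"
    and "triangular_block u \<noteq> triangular_block v"
  then show "card {w\<in>{0..<triangular k}. triangular_block w = triangular_block u}
      \<noteq> card {w\<in>{0..<triangular k}. triangular_block w = triangular_block v}"
    using card_triangular_block_class[of u k] card_triangular_block_class[of v k] by simp
qed simp

theorem lemma4:
  fixes k :: nat
  assumes "k \<ge> 1"
  shows "(\<exists>E. simple_graph {0..<triangular k} E \<and> locally_irregular E \<and>
             card E = k * (k + 1) * (k - 1) * (3 * k + 2) div 24)
       \<and> (\<forall>E. simple_graph {0..<triangular k} E \<and> locally_irregular E \<longrightarrow>
             card E \<le> k * (k + 1) * (k - 1) * (3 * k + 2) div 24)"
proof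
  let ?E = "complete_multipartite triangular_block {0..<triangular k}"
  have "card ?E = k * (k + 1) * (k - 1) * (3 * k + 2) div 24"
    unfolding card_complete_multipartite_triangular_block[symmetric] by simp
  then show "\<exists>E. simple_graph {0..<triangular k} E \<and> locally_irregular E \<and>
      card E = k * (k + 1) * (k - 1) * (3 * k + 2) div 24"
    using simple_graph_complete_multipartite locally_irregular_complete_multipartite_triangular_block
    by blast
  show "\<forall>E. simple_graph {0..<triangular k} E \<and> locally_irregular E \<longrightarrow>
      card E \<le> k * (k + 1) * (k - 1) * (3 * k + 2) div 24"
    using locally_irregular_triangular_card_edges_le
    by (simp add: less_eq_div_iff_mult_less_eq mult.commute)
qed

end
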